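(* Let $(n_0^{(m)},n_1^{(m)})_{m\ge 1}$ be a sequence of pairs of integers with $2\le n_0^{(m)}\le n_1^{(m)}$, $n_1^{(m)}\to\infty$, and $n_0^{(m)}=(\log n_1^{(m)})^{\omega(1)}$, i.e. $\frac{\log n_0^{(m)}}{\log\log n_1^{(m)}}\to\infty$ as $m\to\infty$. Writing $n_0=n_0^{(m)}$, $n_1=n_1^{(m)}$, let $k=\frac{\log n_1}{\log n_0}$ and let $x_0$ be the unique root of the equation $x-1-x^{\frac{k-1}{k}}=0$ in the interval $[1,\infty)$. Then $$ch(K_{n_0,n_1})\ge (1-o(1))\frac{\log n_1}{\log x_0}$$ as $m\to\infty$.
   Context: All logarithms are to base 2. For a graph $G=(V,E)$, the choice number $ch(G)$ is the minimum integer $k$ such that for every assignment of a list $S(v)$ of at least $k$ colors to each vertex $v\in V$, there is a proper vertex coloring of $G$ assigning to each vertex $v$ a color from $S(v)$. $K_{n_0,n_1}$ denotes the complete bipartite graph with parts of sizes $n_0$ and $n_1$. *)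

theory Defs
  imports "HOL-Analysis.Analysis"
begin

text \<open>A graph is given by a vertex set V and a symmetric edge relation E.
  Colours are natural numbers (WLOG, lists are finite).\<close>

definition list_colorable :: "'v set \<Rightarrow> ('v \<Rightarrow> 'v \<Rightarrow> bool) \<Rightarrow> ('v \<Rightarrow> nat set) \<Rightarrow> bool" where
  "list_colorable V E S \<longleftrightarrow>
     (\<exists>f. (\<forall>v\<in>V. f v \<in> S v) \<and> (\<forall>u\<in>V. \<forall>v\<in>V. E u v \<longrightarrow> f u \<noteq> f v))"

definition choosable :: "'v set \<Rightarrow> ('v \<Rightarrow> 'v \<Rightarrow> bool) \<Rightarrow> nat \<Rightarrow> bool" where
  "choosable V E k \<longleftrightarrow>
     (\<forall>S. (\<forall>v\<in>V. finite (S v) \<and> k \<le> card (S v)) \<longrightarrow> list_colorable V E S)"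

definition choice_number :: "'v set \<Rightarrow> ('v \<Rightarrow> 'v \<Rightarrow> bool) \<Rightarrow> nat" where
  "choice_number V E = (LEAST k. choosable V E k)"

definition Kbip_V :: "nat \<Rightarrow> nat \<Rightarrow> (nat + nat) set" where
  "Kbip_V n0 n1 = Inl ` {..<n0} \<union> Inr ` {..<n1}"

definition Kbip_E :: "nat + nat \<Rightarrow> nat + nat \<Rightarrow> bool" where
  "Kbip_E u v \<longleftrightarrow> (isl u \<noteq> isl v)"

definition ch_Kbip :: "nat \<Rightarrow> nat \<Rightarrow> nat" where
  "ch_Kbip n0 n1 = choice_number (Kbip_V n0 n1) Kbip_E"

definition root_x0 :: "real \<Rightarrow> real" where
  "root_x0 k = (THE x. 1 \<le> x \<and> x - 1 - x powr ((k - 1) / k) = 0)"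

end

(*
  The lists are t-subsets of a ground set of N = O(t^2 x) colours, where x = x0 and
  t = (1 - delta) log n1 / log x0. Put s = ceil (N / x). The n1 vertices of the large side get
  t-sets such that every s-subset of the colours contains one of them, the n0 vertices of the
  small side get t-sets such that every (N - s + 1)-subset contains one of them. In a proper
  colouring, the set Y of colours used on the small side either has at least s elements, and then
  some large-side list lies inside Y, or its complement has at least N - s + 1 elements and then
  contains some small-side list.

  By the union bound, m random t-sets meet the requirement for q-subsets of density q / N ~ a once
  m a^t >= 2N, i.e. n1 x^(-t) >= 2N and n0 (1 - 1/x)^t >= 2N. The defining equation of x0 says
  1 - 1/x0 = x0^(-1/k), so both conditions become n^delta >= 2N for n = n1 resp. n0. Since N is
  polylogarithmic in n1, this is where log n0 / log log n1 -> infinity is needed.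
*)
theory Submission
  imports Defs
begin

definition turan_family :: "nat \<Rightarrow> nat \<Rightarrow> nat \<Rightarrow> nat \<Rightarrow> (nat \<Rightarrow> nat set) \<Rightarrow> bool" where
  "turan_family N t r m g \<longleftrightarrow>
     (\<forall>i<m. g i \<subseteq> {..<N} \<and> card (g i) = t) \<and>
     (\<forall>X. X \<subseteq> {..<N} \<longrightarrow> card X = r \<longrightarrow> (\<exists>i<m. g i \<subseteq> X))"

lemma turan_family_exists_if_count:
  fixes N r t m :: nat
  assumes "t \<le> r" "r \<le> N"
    and count: "(N choose r) * ((N choose t) - (r choose t)) ^ m < (N choose t) ^ m"
  shows "\<exists>g. turan_family N t r m g"
proof -
  define T where "T = {A. A \<subseteq> {..<N} \<and> card A = t}"
  define R where "R = {X. X \<subseteq> {..<N} \<and> card X = r}"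
  define F where "F = PiE {..<m} (\<lambda>_. T)"
  define Bad where "Bad X = PiE {..<m} (\<lambda>_. {A\<in>T. \<not> A \<subseteq> X})" for X
  have finT: "finite T" and finR: "finite R"
    unfolding T_def R_def by (auto intro: finite_subset[of _ "Pow {..<N}"])
  have card_T: "card T = N choose t"
    unfolding T_def using n_subsets[of "{..<N}" t] by simp
  have card_Bad: "card (Bad X) = ((N choose t) - (r choose t)) ^ m" if "X \<in> R" for X
  proof -
    have X: "X \<subseteq> {..<N}" "card X = r" "finite X"
      using that finite_subset unfolding R_def by auto
    then have "{A\<in>T. A \<subseteq> X} = {A. A \<subseteq> X \<and> card A = t}"
      unfolding T_def by auto
    then have "card {A\<in>T. A \<subseteq> X} = r choose t"
      using n_subsets[of X t] X by simp
    moreover have "{A\<in>T. \<not> A \<subseteq> X} = T - {A\<in>T. A \<subseteq> X}" by auto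
    ultimately show ?thesis
      unfolding Bad_def using finT by (simp add: card_PiE card_Diff_subset card_T)
  qed
  have "card (\<Union>X\<in>R. Bad X) \<le> (\<Sum>X\<in>R. card (Bad X))"
    using finR by (rule card_UN_le)
  also have "\<dots> = (N choose r) * ((N choose t) - (r choose t)) ^ m"
    using card_Bad n_subsets[of "{..<N}" r] unfolding R_def by simp
  also have "\<dots> < card F"
    using count unfolding F_def by (simp add: card_PiE card_T)
  finally have "card (\<Union>X\<in>R. Bad X) < card F" .
  moreover have "finite (Bad X)" for X
    unfolding Bad_def using finT by (intro finite_PiE) auto
  ultimately have "\<not> F \<subseteq> (\<Union>X\<in>R. Bad X)"
    using finR by (meson card_mono finite_UN_I not_le)
  then obtain g where g: "g \<in> F" "\<And>X. X \<in> R \<Longrightarrow> g \<notin> Bad X"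
    by blast
  have "\<exists>i<m. g i \<subseteq> X" if "X \<in> R" for X
    using g(1) g(2)[OF that] unfolding F_def Bad_def PiE_iff by blast
  with g(1) show ?thesis
    unfolding turan_family_def F_def R_def T_def by blast
qed

lemma binomial_ratio_ge:
  fixes N r t :: nat
  assumes "t \<le> r" "r \<le> N"
  shows "real (N choose t) * ((real r - real t) / real N) ^ t \<le> real (r choose t)"
proof -
  define c where "c = (real r - real t) / real N"
  have "real (N choose t) * fact t * c ^ t = (\<Prod>i<t. (real N - real i) * c)"
    by (simp add: binomial_gbinomial gbinomial_mult_fact' prod.distrib atLeast0LessThan)
  also have "\<dots> \<le> (\<Prod>i<t. real r - real i)"
  proof (rule prod_mono)
    fix i assume "i \<in> {..<t}"
    then have i: "i < t" by simp
    have "(real N - real i) * c \<le> real N * c"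
      using assms i by (intro mult_right_mono) (auto simp: c_def)
    also have "\<dots> \<le> real r - real i"
      using assms i by (cases "N = 0") (auto simp: c_def)
    finally show "0 \<le> (real N - real i) * c \<and> (real N - real i) * c \<le> real r - real i"
      using assms i by (simp add: c_def)
  qed
  also have "\<dots> = real (r choose t) * fact t"
    by (simp add: binomial_gbinomial gbinomial_mult_fact' atLeast0LessThan)
  finally show ?thesis by (simp add: c_def)
qed

lemma turan_family_exists:
  fixes N r t m :: nat
  assumes "t \<le> r" "r \<le> N" "1 \<le> N"
    and many: "real N \<le> real m * ((real r - real t) / real N) ^ t"
  shows "\<exists>g. turan_family N t r m g"
proof (rule turan_family_exists_if_count[OF assms(1,2)])
  define B where "B = real (N choose t)"
  define p where "p = real (r choose t) / B"
  have B_pos: "B > 0" unfolding B_def using assms by simp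
  have rt: "r choose t \<le> N choose t" using assms by (simp add: binomial_right_mono)
  then have p: "0 \<le> p" "p \<le> 1"
    unfolding p_def using B_pos by (auto simp: B_def divide_le_eq_1)
  have "((real r - real t) / real N) ^ t \<le> p"
    using binomial_ratio_ge[OF assms(1,2)] B_pos unfolding p_def B_def
    by (simp add: field_simps)
  then have mp: "real N \<le> real m * p"
    using many by (meson mult_left_mono of_nat_0_le_iff order_trans)
  have "(1 - p) ^ m \<le> exp (- p) ^ m"
    using p exp_ge_add_one_self[of "-p"] by (intro power_mono) auto
  also have "\<dots> = exp (- (real m * p))"
    by (simp add: exp_of_nat_mult[symmetric])
  also have "\<dots> \<le> exp (- real N)"
    using mp by simp
  finally have decay: "(1 - p) ^ m \<le> exp (- real N)" .
  have "real (N choose r) * (B - real (r choose t)) ^ m = real (N choose r) * (1 - p) ^ m * B ^ m"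
    unfolding p_def using B_pos by (simp add: power_mult_distrib[symmetric] field_simps)
  also have "\<dots> \<le> 2 ^ N * exp (- real N) * B ^ m"
    using decay B_pos p binomial_le_pow2[of N r]
    by (intro mult_right_mono mult_mono) (auto simp flip: of_nat_le_iff)
  also have "\<dots> < B ^ m"
  proof -
    have "2 < exp (1::real)"
      using e_approx_32 by (simp add: abs_if split: if_splits)
    then have "2 ^ N * exp (- real N) = (2 / exp 1) ^ N"
      by (simp add: power_divide exp_of_nat_mult[symmetric] exp_minus field_simps)
    also have "\<dots> < 1"
      using \<open>2 < exp 1\<close> assms(3) by (subst power_less_one_iff) auto
    finally show ?thesis using B_pos by simp
  qed
  finally have "real ((N choose r) * ((N choose t) - (r choose t)) ^ m) < real ((N choose t) ^ m)"
    using rt unfolding B_def by (simp add: of_nat_diff)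
  then show "(N choose r) * ((N choose t) - (r choose t)) ^ m < (N choose t) ^ m"
    by (simp only: of_nat_less_iff)
qed

lemma half_power_le_power:
  fixes a \<epsilon> y :: real
  assumes "0 \<le> a" "0 \<le> \<epsilon>" "\<epsilon> \<le> 1" "real t * \<epsilon> \<le> 1 / 2" "a * (1 - \<epsilon>) \<le> y"
  shows "a ^ t / 2 \<le> y ^ t"
proof -
  have "1 / 2 \<le> (1 - \<epsilon>) ^ t"
    using Bernoulli_inequality[of "- \<epsilon>" t] assms by simp
  then have "a ^ t * (1 / 2) \<le> a ^ t * (1 - \<epsilon>) ^ t"
    using assms by (intro mult_left_mono) auto
  then have "a ^ t / 2 \<le> a ^ t * (1 - \<epsilon>) ^ t"
    by simp
  also have "\<dots> \<le> y ^ t"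
    using assms by (simp flip: power_mult_distrib add: power_mono)
  finally show ?thesis .
qed

lemma turan_family_exists_fraction:
  fixes a x :: real and N q t m :: nat
  assumes "0 < a" "1 \<le> a * x" "1 \<le> N" "q \<le> N" "a * real N \<le> real q"
    and N: "2 * real t ^ 2 * x \<le> real N"
    and m: "2 * real N \<le> real m * a ^ t"
  shows "\<exists>g. turan_family N t q m g"
proof -
  (* Removing t elements lowers the density a by at most the factor 1 - eps,
     and N >= 2 t^2 x makes (1 - eps)^t >= 1/2. *)
  define \<epsilon> where "\<epsilon> = real t * x / real N"
  have x: "0 < x"
    using zero_less_mult_pos[of a x] assms by simp
  have \<epsilon>: "0 \<le> \<epsilon>" "real t * \<epsilon> \<le> 1 / 2"
    using N x \<open>1 \<le> N\<close> by (auto simp: \<epsilon>_def power2_eq_square field_simps)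
  moreover have "\<epsilon> \<le> 1"
  proof (cases "t = 0")
    case False
    then have "1 * \<epsilon> \<le> real t * \<epsilon>"
      using \<epsilon> by (intro mult_right_mono) auto
    with \<epsilon> show ?thesis by linarith
  qed (simp add: \<epsilon>_def)
  moreover have fraction: "a * (1 - \<epsilon>) \<le> (real q - real t) / real N"
  proof -
    have "a * (1 - \<epsilon>) = (a * real N - a * x * real t) / real N"
      using \<open>1 \<le> N\<close> unfolding \<epsilon>_def by (simp add: field_simps)
    also have "\<dots> \<le> (real q - real t) / real N"
      using assms mult_right_mono[of 1 "a * x" "real t"] by (intro divide_right_mono) auto
    finally show ?thesis .
  qed
  ultimately have "a ^ t / 2 \<le> ((real q - real t) / real N) ^ t"
    using assms by (intro half_power_le_power) auto
  then have "real m * (a ^ t / 2) \<le> real m * ((real q - real t) / real N) ^ t"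
    by (rule mult_left_mono) simp
  with m have "real N \<le> real m * ((real q - real t) / real N) ^ t"
    by simp
  moreover have "0 \<le> a * (1 - \<epsilon>)"
    using \<open>\<epsilon> \<le> 1\<close> \<open>0 < a\<close> by simp
  with fraction have "0 \<le> (real q - real t) / real N"
    by linarith
  then have "t \<le> q"
    using \<open>1 \<le> N\<close> by (simp add: zero_le_divide_iff)
  ultimately show ?thesis
    using turan_family_exists assms by blast
qed

lemma choosable_mono: "choosable V E k \<Longrightarrow> k \<le> l \<Longrightarrow> choosable V E l"
  unfolding choosable_def by (meson order_trans)

lemma choice_number_gt:
  assumes "choosable V E c" "\<not> choosable V E t"
  shows "t < choice_number V E"
proof -
  have "choosable V E (choice_number V E)"
    unfolding choice_number_def using assms(1) by (rule LeastI)
  then show ?thesis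
    using assms(2) choosable_mono by (meson not_le)
qed

lemma choosable_Kbip: "choosable (Kbip_V n0 n1) Kbip_E (Suc n0)"
  unfolding choosable_def list_colorable_def
proof (intro allI impI)
  fix S :: "nat + nat \<Rightarrow> nat set"
  assume S: "\<forall>v\<in>Kbip_V n0 n1. finite (S v) \<and> Suc n0 \<le> card (S v)"
  define fA where "fA i = (SOME c. c \<in> S (Inl i))" for i
  define Y where "Y = fA ` {..<n0}"
  define fB where "fB j = (SOME c. c \<in> S (Inr j) - Y)" for j
  have fA: "fA i \<in> S (Inl i)" if "i < n0" for i
  proof -
    have "Suc n0 \<le> card (S (Inl i))"
      using S that unfolding Kbip_V_def by auto
    then show ?thesis
      unfolding fA_def some_in_eq by auto
  qed
  have fB: "fB j \<in> S (Inr j) - Y" if "j < n1" for j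
  proof -
    have "finite (S (Inr j))" "Suc n0 \<le> card (S (Inr j))"
      using S that unfolding Kbip_V_def by auto
    moreover have "card Y \<le> n0"
      unfolding Y_def using card_image_le[of "{..<n0}" fA] by simp
    ultimately have "\<not> S (Inr j) \<subseteq> Y"
      using card_mono[of Y "S (Inr j)"] unfolding Y_def by force
    then show ?thesis
      unfolding fB_def some_in_eq by auto
  qed
  show "\<exists>f. (\<forall>v\<in>Kbip_V n0 n1. f v \<in> S v) \<and>
         (\<forall>u\<in>Kbip_V n0 n1. \<forall>v\<in>Kbip_V n0 n1. Kbip_E u v \<longrightarrow> f u \<noteq> f v)"
  proof (intro exI[of _ "case_sum fA fB"] conjI ballI impI)
    fix v assume "v \<in> Kbip_V n0 n1"
    with fA fB show "case_sum fA fB v \<in> S v"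
      unfolding Kbip_V_def by auto
  next
    fix u v assume "u \<in> Kbip_V n0 n1" "v \<in> Kbip_V n0 n1" "Kbip_E u v"
    moreover have "fA i \<noteq> fB j" "fB j \<noteq> fA i" if "i < n0" "j < n1" for i j
    proof -
      have "fA i \<in> Y"
        using that(1) unfolding Y_def by simp
      with fB[OF that(2)] show "fA i \<noteq> fB j" "fB j \<noteq> fA i"
        by auto
    qed
    ultimately show "case_sum fA fB u \<noteq> case_sum fA fB v"
      unfolding Kbip_V_def Kbip_E_def by auto
  qed
qed

lemma ch_Kbip_gt: "\<not> choosable (Kbip_V n0 n1) Kbip_E t \<Longrightarrow> t < ch_Kbip n0 n1"
  unfolding ch_Kbip_def using choice_number_gt[OF choosable_Kbip] .

lemma turan_families_separate:
  assumes "s \<le> N" "Y \<subseteq> {..<N}"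
    and A: "turan_family N t (N - s + 1) n0 gA"
    and B: "turan_family N t s n1 gB"
  shows "(\<exists>j<n1. gB j \<subseteq> Y) \<or> (\<exists>i<n0. gA i \<subseteq> {..<N} - Y)"
proof (cases "s \<le> card Y")
  case True
  then obtain X where X: "X \<subseteq> Y" "card X = s"
    by (meson obtain_subset_with_card_n)
  moreover from X \<open>Y \<subseteq> {..<N}\<close> have "X \<subseteq> {..<N}"
    by blast
  ultimately obtain j where "j < n1" "gB j \<subseteq> X"
    using B unfolding turan_family_def by blast
  with X show ?thesis
    by blast
next
  case False
  have "finite Y"
    using \<open>Y \<subseteq> {..<N}\<close> finite_subset by blast
  then have "card ({..<N} - Y) = N - card Y"
    using \<open>Y \<subseteq> {..<N}\<close> by (simp add: card_Diff_subset)
  then have "N - s + 1 \<le> card ({..<N} - Y)"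
    using False \<open>s \<le> N\<close> by linarith
  then obtain X where X: "X \<subseteq> {..<N} - Y" "card X = N - s + 1"
    by (meson obtain_subset_with_card_n)
  then obtain i where "i < n0" "gA i \<subseteq> X"
    using A unfolding turan_family_def by blast
  with X show ?thesis
    by blast
qed

lemma not_choosable_Kbip_if_turan:
  assumes "s \<le> N"
    and A: "turan_family N t (N - s + 1) n0 gA"
    and B: "turan_family N t s n1 gB"
  shows "\<not> choosable (Kbip_V n0 n1) Kbip_E t"
proof
  define S where "S v = (case v of Inl i \<Rightarrow> gA i | Inr j \<Rightarrow> gB j)" for v
  assume "choosable (Kbip_V n0 n1) Kbip_E t"
  moreover have "finite (S v) \<and> t \<le> card (S v)" if "v \<in> Kbip_V n0 n1" for v
    using that A B finite_subset[of _ "{..<N}"]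
    unfolding Kbip_V_def S_def turan_family_def by auto
  ultimately have "list_colorable (Kbip_V n0 n1) Kbip_E S"
    unfolding choosable_def by blast
  then obtain f where
    f_in: "\<And>v. v \<in> Kbip_V n0 n1 \<Longrightarrow> f v \<in> S v" and
    f_proper: "\<And>u v. u \<in> Kbip_V n0 n1 \<Longrightarrow> v \<in> Kbip_V n0 n1 \<Longrightarrow> Kbip_E u v \<Longrightarrow> f u \<noteq> f v"
    unfolding list_colorable_def by blast
  define Y where "Y = (\<lambda>i. f (Inl i)) ` {..<n0}"
  have fA: "f (Inl i) \<in> gA i" if "i < n0" for i
    using f_in[of "Inl i"] that unfolding Kbip_V_def S_def by auto
  have fB: "f (Inr j) \<in> gB j" "f (Inr j) \<notin> Y" if "j < n1" for j
  proof -
    show "f (Inr j) \<in> gB j"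
      using f_in[of "Inr j"] that unfolding Kbip_V_def S_def by auto
    have "f (Inr j) \<noteq> f (Inl i)" if "i < n0" for i
      using f_proper[of "Inr j" "Inl i"] that \<open>j < n1\<close> unfolding Kbip_V_def Kbip_E_def by auto
    then show "f (Inr j) \<notin> Y"
      unfolding Y_def by auto
  qed
  have "gA i \<subseteq> {..<N}" if "i < n0" for i
    using A that unfolding turan_family_def by blast
  with fA have "Y \<subseteq> {..<N}"
    unfolding Y_def by auto
  from turan_families_separate[OF \<open>s \<le> N\<close> this A B]
  consider (large) j where "j < n1" "gB j \<subseteq> Y" | (small) i where "i < n0" "gA i \<subseteq> {..<N} - Y"
    by blast
  then show False
  proof cases
    case large
    with fB show False by blast
  next
    case small
    with fA show False unfolding Y_def by blast
  qed
qed

lemma not_choosable_Kbip: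
  fixes x :: real and t N n0 n1 :: nat
  assumes x: "2 \<le> x" and "1 \<le> N" "2 * real t ^ 2 * x \<le> real N"
    and n0: "2 * real N \<le> real n0 * (1 - 1 / x) ^ t"
    and n1: "2 * real N \<le> real n1 * (1 / x) ^ t"
  shows "\<not> choosable (Kbip_V n0 n1) Kbip_E t"
proof -
  define s where "s = nat \<lceil>real N / x\<rceil>"
  have "0 \<le> real N / x"
    using x by simp
  then have s: "real N / x \<le> real s" "real s < real N / x + 1"
    unfolding s_def using ceiling_correct[of "real N / x"] by auto
  have "real N / x \<le> real N"
    using x mult_left_mono[of 1 x "real N"] by (simp add: pos_divide_le_eq)
  then have "s \<le> N"
    unfolding s_def by (simp add: nat_le_iff ceiling_le_iff)
  have "0 < real N / x"
    using x \<open>1 \<le> N\<close> by simp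
  with s have "1 \<le> s"
    by simp
  have "\<exists>gB. turan_family N t s n1 gB"
    using x s(1) n1 \<open>s \<le> N\<close> assms(2,3) by (intro turan_family_exists_fraction[of "1 / x"]) simp_all
  moreover have "\<exists>gA. turan_family N t (N - s + 1) n0 gA"
  proof (rule turan_family_exists_fraction[of "1 - 1 / x"])
    show "(1 - 1 / x) * real N \<le> real (N - s + 1)"
      using s(2) \<open>s \<le> N\<close> by (simp add: of_nat_diff algebra_simps)
    show "1 \<le> (1 - 1 / x) * x"
      using x by (simp add: algebra_simps)
  qed (use x n0 \<open>1 \<le> s\<close> assms(2,3) in simp_all)
  ultimately show ?thesis
    using not_choosable_Kbip_if_turan \<open>s \<le> N\<close> by blast
qed

lemma powr_diff_less_diff:
  fixes x y e :: real
  assumes "1 \<le> x" "x < y" "0 \<le> e" "e < 1"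
  shows "y powr e - x powr e < y - x"
proof -
  define q where "q = y / x"
  have q: "1 < q" "y = x * q"
    unfolding q_def using assms by auto
  have "y powr e - x powr e = x powr e * (q powr e - 1)"
    using assms q by (simp add: powr_mult algebra_simps)
  also have "\<dots> < x powr e * (q - 1)"
    using q assms powr_less_mono[of e 1 q] by (cases "e = 0") auto
  also have "\<dots> \<le> x * (q - 1)"
    using q assms powr_mono[of e 1 x] by (intro mult_right_mono) auto
  also have "\<dots> = y - x"
    using q by (simp add: algebra_simps)
  finally show ?thesis .
qed

lemma root_x0_eq:
  fixes k x :: real
  assumes "1 \<le> k" "1 \<le> x" "x - 1 - x powr ((k - 1) / k) = 0"
  shows "root_x0 k = x"
  unfolding root_x0_def
proof (rule the1_equality)
  have e: "0 \<le> (k - 1) / k" "(k - 1) / k < 1"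
    using assms(1) by auto
  have "y = x" if y: "1 \<le> y" "y - 1 - y powr ((k - 1) / k) = 0" for y
  proof (cases y x rule: linorder_cases)
    case less
    from powr_diff_less_diff[OF y(1) less e] y(2) assms(3) show ?thesis by linarith
  next
    case greater
    from powr_diff_less_diff[OF assms(2) greater e] y(2) assms(3) show ?thesis by linarith
  qed
  with assms(2,3) show "\<exists>!y. 1 \<le> y \<and> y - 1 - y powr ((k - 1) / k) = 0"
    by blast
qed (use assms in blast)

lemma root_exists:
  fixes k :: real
  assumes k: "1 \<le> k"
  shows "\<exists>x. 1 \<le> x \<and> x \<le> 2 * k + 1 \<and> x - 1 - x powr ((k - 1) / k) = 0"
proof -
  define g where "g x = x - 1 - x powr ((k - 1) / k)" for x
  define M where "M = 2 * k + 1"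
  have "M / M powr (1 / k) \<le> M - 1"
  proof -
    have "1 / 2 \<le> ln M"
      using ln2_ge_two_thirds ln_le_cancel_iff[of 2 M] k unfolding M_def by linarith
    then have "1 + 1 / (2 * k) \<le> 1 + ln M / k"
      using k divide_right_mono[of "1/2" "ln M" k] by simp
    also have "\<dots> \<le> exp (ln M / k)"
      by simp
    also have "\<dots> = M powr (1 / k)"
      using k unfolding M_def by (simp add: powr_def)
    finally have "M / M powr (1 / k) \<le> M / (1 + 1 / (2 * k))"
      using k by (intro divide_left_mono mult_pos_pos add_pos_pos) (auto simp: M_def)
    also have "\<dots> = M - 1"
      using k unfolding M_def by (simp add: field_simps)
    finally show ?thesis .
  qed
  moreover have "(k - 1) / k = 1 - 1 / k"
    using k by (simp add: field_simps)
  ultimately have "0 \<le> g M"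
    using k unfolding g_def M_def by (simp add: powr_diff)
  moreover have "g 1 \<le> 0" "1 \<le> M"
    unfolding g_def M_def using k by auto
  moreover have "continuous_on {1..M} g"
    unfolding g_def by (intro continuous_intros) auto
  ultimately show ?thesis
    using IVT'[of g 1 0 M] unfolding g_def M_def by blast
qed

lemma root_x0:
  fixes k :: real
  assumes k: "1 \<le> k"
  shows "2 \<le> root_x0 k" "root_x0 k \<le> 2 * k + 1" "1 - 1 / root_x0 k = 1 / root_x0 k powr (1 / k)"
proof -
  obtain x where x: "1 \<le> x" "x \<le> 2 * k + 1" "x - 1 = x powr ((k - 1) / k)"
    using root_exists[OF k] by auto
  then have root: "root_x0 k = x"
    using root_x0_eq[OF k] by simp
  have "1 \<le> x powr ((k - 1) / k)"
    using x k by (intro ge_one_powr_ge_zero) auto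
  with x root show "2 \<le> root_x0 k" "root_x0 k \<le> 2 * k + 1"
    by auto
  have "(k - 1) / k = 1 - 1 / k"
    using k by (simp add: field_simps)
  with x have "x - 1 = x / x powr (1 / k)"
    by (simp add: powr_diff)
  with root x show "1 - 1 / root_x0 k = 1 / root_x0 k powr (1 / k)"
    by (simp add: field_simps)
qed

lemma small_ground_set_exists:
  fixes L x :: real and t :: nat
  assumes "2 \<le> L" "real t \<le> L" "0 \<le> x" "x \<le> 3 * L"
  obtains N :: nat where "1 \<le> N" "2 * real t ^ 2 * x \<le> real N" "log 2 (2 * real N) \<le> 7 * log 2 L"
proof -
  define N where "N = nat \<lceil>2 * real t ^ 2 * x\<rceil> + 1"
  have "real N = of_int \<lceil>2 * real t ^ 2 * x\<rceil> + 1"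
    unfolding N_def using assms by simp
  then have N: "2 * real t ^ 2 * x \<le> real N" "real N \<le> 2 * real t ^ 2 * x + 2" "1 \<le> N"
    using le_of_int_ceiling[of "2 * real t ^ 2 * x"]
      of_int_ceiling_le_add_one[of "2 * real t ^ 2 * x"] by (linarith, linarith, simp add: N_def)
  have "2 * real N \<le> 4 * real t ^ 2 * x + 4"
    using N by simp
  also have "\<dots> \<le> 4 * L ^ 2 * (3 * L) + 4"
    using assms by (intro add_right_mono mult_mono power_mono) auto
  also have "\<dots> \<le> 16 * L ^ 3"
    using assms power_increasing[of 0 3 L] by (simp add: power2_eq_square power3_eq_cube)
  also have "\<dots> \<le> L ^ 4 * L ^ 3"
    using assms power_mono[of 2 L 4] by (intro mult_right_mono) auto
  finally have "log 2 (2 * real N) \<le> log 2 (L ^ 4 * L ^ 3)"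
    using assms N by (subst log_le_cancel_iff) auto
  with N that show ?thesis
    using assms by (simp add: log_nat_power flip: power_add)
qed

lemma le_mult_inverse_power_if_log_le:
  fixes c y n :: real
  assumes "0 < c" "0 < y" "0 < n" "log 2 c + real t * log 2 y \<le> log 2 n"
  shows "c \<le> n * (1 / y) ^ t"
proof -
  have "log 2 (c * y ^ t) \<le> log 2 n"
    using assms by (simp add: log_mult log_nat_power)
  then have "c * y ^ t \<le> n"
    using assms by simp
  then show ?thesis
    using assms by (simp add: field_simps power_one_over)
qed

lemma not_choosable_Kbip_root:
  fixes n0 n1 t :: nat and \<delta> :: real
  assumes n: "2 \<le> n0" "n0 \<le> n1" and "0 < \<delta>"
    and LL: "1 \<le> log 2 (log 2 (real n1))"
    and key: "7 * log 2 (log 2 (real n1)) \<le> \<delta> * log 2 (real n0)"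
    and t: "real t * log 2 (root_x0 (log 2 (real n1) / log 2 (real n0))) \<le> (1 - \<delta>) * log 2 (real n1)"
  shows "\<not> choosable (Kbip_V n0 n1) Kbip_E t"
proof -
  define a where "a = log 2 (real n0)"
  define L where "L = log 2 (real n1)"
  define k where "k = L / a"
  define x where "x = root_x0 k"
  define lx where "lx = log 2 x"
  have a: "1 \<le> a" "a \<le> L" and L: "2 \<le> L"
    unfolding a_def L_def using n LL by (auto simp: le_log_iff)
  have k: "1 \<le> k" "k \<le> L" "(1 - \<delta>) * L / k = (1 - \<delta>) * a"
    unfolding k_def using a L by (auto simp: field_simps)
  have x: "2 \<le> x" "x \<le> 3 * L" "1 - 1 / x = 1 / x powr (1 / k)"
    using root_x0[OF k(1)] k unfolding x_def by auto
  have "1 \<le> lx"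
    unfolding lx_def using x by auto
  have tlx: "real t * lx \<le> (1 - \<delta>) * L"
    using t unfolding lx_def x_def k_def a_def L_def .
  have "real t \<le> real t * lx"
    using \<open>1 \<le> lx\<close> mult_left_mono[of 1 lx "real t"] by simp
  also have "\<dots> \<le> L"
    using tlx mult_nonneg_nonneg[of \<delta> L] \<open>0 < \<delta>\<close> L unfolding left_diff_distrib by linarith
  finally obtain N where N: "1 \<le> N" "2 * real t ^ 2 * x \<le> real N" "log 2 (2 * real N) \<le> 7 * log 2 L"
    using small_ground_set_exists[OF L _ _ x(2)] x(1) by auto
  with key have N_small: "log 2 (2 * real N) \<le> \<delta> * a"
    unfolding a_def L_def by linarith
  have "2 * real N \<le> real n1 * (1 / x) ^ t"
  proof (rule le_mult_inverse_power_if_log_le)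
    show "log 2 (2 * real N) + real t * log 2 x \<le> log 2 (real n1)"
      using N_small tlx mult_left_mono[OF a(2), of \<delta>] \<open>0 < \<delta>\<close>
      unfolding lx_def L_def left_diff_distrib by linarith
  qed (use x n N in auto)
  moreover have "2 * real N \<le> real n0 * (1 - 1 / x) ^ t"
    unfolding x(3)
  proof (rule le_mult_inverse_power_if_log_le)
    have "real t * log 2 (x powr (1 / k)) = real t * lx / k"
      using x unfolding lx_def by (simp add: log_powr)
    also have "\<dots> \<le> (1 - \<delta>) * a"
      using tlx k by (simp add: divide_right_mono flip: k(3))
    finally show "log 2 (2 * real N) + real t * log 2 (x powr (1 / k)) \<le> log 2 (real n0)"
      using N_small unfolding a_def left_diff_distrib by linarith
  qed (use x n N in auto)
  ultimately show ?thesis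
    using x N by (intro not_choosable_Kbip[of x N t]) auto
qed

lemma ch_Kbip_lower_bound:
  fixes n0 n1 :: nat and \<delta> :: real
  assumes n: "2 \<le> n0" "n0 \<le> n1" and "0 < \<delta>"
    and LL: "1 \<le> log 2 (log 2 (real n1))"
    and key: "7 * log 2 (log 2 (real n1)) \<le> \<delta> * log 2 (real n0)"
  shows "(1 - \<delta>) * log 2 (real n1) / log 2 (root_x0 (log 2 (real n1) / log 2 (real n0)))
           \<le> real (ch_Kbip n0 n1)"
proof -
  define lx where "lx = log 2 (root_x0 (log 2 (real n1) / log 2 (real n0)))"
  define B where "B = (1 - \<delta>) * log 2 (real n1) / lx"
  have "1 \<le> log 2 (real n1) / log 2 (real n0)"
    using n by simp
  from root_x0(1)[OF this] have "1 \<le> lx"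
    unfolding lx_def by (simp add: le_log_iff)
  show ?thesis
  proof (cases "B < 0")
    case False
    define t where "t = nat \<lfloor>B\<rfloor>"
    have t: "real t \<le> B" "B < real t + 1"
      unfolding t_def using False by linarith+
    then have "real t * lx \<le> (1 - \<delta>) * log 2 (real n1)"
      using \<open>1 \<le> lx\<close> unfolding B_def by (simp add: le_divide_eq)
    then have "t < ch_Kbip n0 n1"
      using not_choosable_Kbip_root[OF n \<open>0 < \<delta>\<close> LL key] ch_Kbip_gt unfolding lx_def by blast
    with t show ?thesis
      unfolding B_def lx_def by linarith
  qed (simp add: B_def lx_def)
qed

theorem theorem3:
  fixes n0 n1 :: "nat \<Rightarrow> nat"
  assumes "\<And>m. 2 \<le> n0 m" and "\<And>m. n0 m \<le> n1 m"
    and "filterlim n1 at_top sequentially"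
    and "filterlim (\<lambda>m. log 2 (real (n0 m)) / log 2 (log 2 (real (n1 m)))) at_top sequentially"
  shows "\<forall>\<delta>>0. eventually (\<lambda>m.
           real (ch_Kbip (n0 m) (n1 m)) \<ge>
             (1 - \<delta>) * log 2 (real (n1 m))
               / log 2 (root_x0 (log 2 (real (n1 m)) / log 2 (real (n0 m)))))
         sequentially"
proof (intro allI impI)
  fix \<delta> :: real assume "0 < \<delta>"
  have "eventually (\<lambda>m. 4 \<le> n1 m) sequentially"
    using assms(3) by (simp add: filterlim_at_top)
  moreover have "eventually (\<lambda>m. 7 / \<delta> \<le> log 2 (real (n0 m)) / log 2 (log 2 (real (n1 m)))) sequentially"
    using assms(4) by (simp add: filterlim_at_top)
  ultimately show "eventually (\<lambda>m. real (ch_Kbip (n0 m) (n1 m)) \<ge>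
             (1 - \<delta>) * log 2 (real (n1 m))
               / log 2 (root_x0 (log 2 (real (n1 m)) / log 2 (real (n0 m))))) sequentially"
  proof eventually_elim
    case (elim m)
    have "2 \<le> log 2 (real (n1 m))"
      using elim(1) le_log_iff[of 2 "real (n1 m)" 2] by simp
    then have LL: "1 \<le> log 2 (log 2 (real (n1 m)))"
      by simp
    with elim(2) \<open>0 < \<delta>\<close> have "7 * log 2 (log 2 (real (n1 m))) \<le> \<delta> * log 2 (real (n0 m))"
      by (simp add: field_simps)
    with assms(1,2) \<open>0 < \<delta>\<close> LL show ?case
      by (rule ch_Kbip_lower_bound)
  qed
qed

end
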